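(* Let $p\ge 1$, let $k_i,k_j>0$ be real numbers, and let $A,B$ be real symmetric $p\times p$ matrices. Consider the optimization problem \[ \max_{Y\in\mathbb{S}_+^p}\; k_i\log\det\Big(A-\tfrac{1}{k_i}Y\Big)+k_j\log\det\Big(B+\tfrac{1}{k_j}Y\Big)\quad\text{subject to}\quad -k_jB\prec Y\prec k_iA . \] Suppose this problem is feasible, i.e. there exists $Y\in\mathbb{S}_+^p$ with $-k_jB\prec Y\prec k_iA$. Then $A\succ O$, and an optimal solution of the problem is \[ Y^\ast=\frac{k_ik_j}{k_i+k_j}\,A^{1/2}\,\mathrm{proj}_{\mathbb{S}_+^p}\Big(I-A^{-1/2}BA^{-1/2}\Big)\,A^{1/2}. \]
   Context: $\mathbb{S}_+^p$ denotes the set of real symmetric positive semi-definite $p\times p$ matrices. For symmetric matrices $X,Y$, $X\preceq Y$ means $Y-X$ is positive semi-definite and $X\prec Y$ means $Y-X$ is positive definite; $O$ is the zero matrix and $I$ the identity. $A^{1/2}$ is the symmetric positive definite square root and $A^{-1/2}$ its inverse. $\mathrm{proj}_{\mathbb{S}_+^p}$ is the Frobenius-norm orthogonal projection onto $\mathbb{S}_+^p$ (for a symmetric matrix with eigen-decomposition $U\mathrm{diag}(\lambda)U^{\mathsf T}$ it equals $U\mathrm{diag}(\max(\lambda,0))U^{\mathsf T}$). *)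

theory Defs
  imports "HOL-Analysis.Analysis"
begin

text \<open>Real p x p matrices are rendered as real^'n^'n with p = CARD('n) (so p >= 1).\<close>

definition sym_mat :: "real^'n^'n \<Rightarrow> bool" where
  "sym_mat A \<longleftrightarrow> transpose A = A"

definition psd :: "real^'n^'n \<Rightarrow> bool" where
  "psd A \<longleftrightarrow> sym_mat A \<and> (\<forall>x. 0 \<le> x \<bullet> (A *v x))"

definition pd :: "real^'n^'n \<Rightarrow> bool" where
  "pd A \<longleftrightarrow> sym_mat A \<and> (\<forall>x. x \<noteq> 0 \<longrightarrow> 0 < x \<bullet> (A *v x))"

definition loewner_le :: "real^'n^'n \<Rightarrow> real^'n^'n \<Rightarrow> bool" (infix "\<preceq>\<^sub>L" 50) where
  "X \<preceq>\<^sub>L Y \<longleftrightarrow> psd (Y - X)"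

definition loewner_less :: "real^'n^'n \<Rightarrow> real^'n^'n \<Rightarrow> bool" (infix "\<prec>\<^sub>L" 50) where
  "X \<prec>\<^sub>L Y \<longleftrightarrow> pd (Y - X)"

definition msqrt :: "real^'n^'n \<Rightarrow> real^'n^'n" where
  "msqrt A = (THE S. psd S \<and> S ** S = A)"

definition msqrt_inv :: "real^'n^'n \<Rightarrow> real^'n^'n" where
  "msqrt_inv A = matrix_inv (msqrt A)"

text \<open>Frobenius-norm orthogonal projection onto S_+^p. The norm on real^'n^'n
  is the Euclidean norm of all entries, i.e. the Frobenius norm.\<close>
definition proj_psd :: "real^'n^'n \<Rightarrow> real^'n^'n" where
  "proj_psd X = (THE P. psd P \<and> (\<forall>Q. psd Q \<longrightarrow> norm (X - P) \<le> norm (X - Q)))"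

definition obj :: "real \<Rightarrow> real \<Rightarrow> real^'n^'n \<Rightarrow> real^'n^'n \<Rightarrow> real^'n^'n \<Rightarrow> real" where
  "obj ki kj A B Y = ki * ln (det (A - (1/ki) *\<^sub>R Y)) + kj * ln (det (B + (1/kj) *\<^sub>R Y))"

definition feasible :: "real \<Rightarrow> real \<Rightarrow> real^'n^'n \<Rightarrow> real^'n^'n \<Rightarrow> real^'n^'n \<Rightarrow> bool" where
  "feasible ki kj A B Y \<longleftrightarrow> psd Y \<and> - (kj *\<^sub>R B) \<prec>\<^sub>L Y \<and> Y \<prec>\<^sub>L ki *\<^sub>R A"

end

(*
  Feasibility gives k_i A \<succ> Y \<succeq> O, so A is positive definite. Diagonalise
  A^{-1/2} B A^{-1/2} = R \<Lambda> R^T with R orthogonal and put G = A^{1/2} R, so that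
  A = G G^T and B = G \<Lambda> G^T. The congruence W \<mapsto> G W G^T is a bijection between the
  feasible sets of the problems for (I, \<Lambda>) and for (A, B), and it shifts the objective by
  the constant (k_i + k_j) ln (det G)^2; hence it maps optimal solutions to optimal solutions,
  and it maps W* = k_i k_j/(k_i + k_j) diag (max (1 - \<lambda>_i) 0) to the claimed Y*.

  For the diagonal problem, concavity of ln det gives the tangent bound
  ln det X \<le> ln det D + \<Sigma>_i (X_ii - D_ii) / D_ii at the positive diagonal matrices
  D = I - W*/k_i and D = \<Lambda> + W*/k_j. Summing, optimality of W* reduces to one KKT
  inequality per coordinate, which depends only on the diagonal entries W_ii \<ge> 0.
*)

theory Submission
  imports Defs
begin

section \<open>Spectral theorem for real symmetric matrices\<close>

definition diag_mat :: "real^'n \<Rightarrow> real^'n^'n" where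
  "diag_mat d = (\<chi> i j. if i = j then d$i else 0)"

lemma sym_mat_inner_commute:
  fixes A :: "real^'n^'n"
  assumes "sym_mat A"
  shows "x \<bullet> (A *v y) = (A *v x) \<bullet> y"
  using assms unfolding sym_mat_def
  by (metis dot_lmul_matrix transpose_matrix_vector inner_commute)

lemma nonneg_quadratic_linear_coeff_eq_0:
  fixes a b :: real
  assumes "\<And>t. 0 \<le> 2*t*b + t^2*a"
  shows "b = 0"
proof (rule ccontr)
  assume "b \<noteq> 0"
  have "a \<ge> 0" using assms[of 1] assms[of "-1"] by simp
  define t where "t = -b/(a+1)"
  have "0 \<le> (2*t*b + t^2*a)*(a+1)^2" using assms \<open>a \<ge> 0\<close> by simp
  also have "\<dots> = 2*b*(t*(a+1))*(a+1) + (t*(a+1))^2*a"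
    by (simp add: power2_eq_square algebra_simps)
  also have "t*(a+1) = -b" using \<open>a \<ge> 0\<close> unfolding t_def by simp
  also have "2*b*(-b)*(a+1) + (-b)^2*a = -(b^2*(a+2))"
    by (simp add: power2_eq_square algebra_simps)
  also have "\<dots> < 0" using \<open>b \<noteq> 0\<close> \<open>a \<ge> 0\<close> by simp
  finally show False by simp
qed

lemma psd_on_subspace_zero_imp_orthogonal:
  fixes M :: "real^'n^'n"
  assumes "sym_mat M" "subspace S" "v \<in> S" "w \<in> S"
    and psd: "\<And>x. x \<in> S \<Longrightarrow> 0 \<le> x \<bullet> (M *v x)"
    and zero: "v \<bullet> (M *v v) = 0"
  shows "w \<bullet> (M *v v) = 0"
proof (rule nonneg_quadratic_linear_coeff_eq_0)
  fix t :: real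
  have "v + t *\<^sub>R w \<in> S" using assms(2-4) by (simp add: subspace_add subspace_scale)
  hence "0 \<le> (v + t *\<^sub>R w) \<bullet> (M *v (v + t *\<^sub>R w))" by (rule psd)
  also have "\<dots> = 2*t*(w \<bullet> (M *v v)) + t^2*(w \<bullet> (M *v w))"
    using zero sym_mat_inner_commute[OF assms(1), of v w]
    by (simp add: matrix_vector_right_distrib matrix_vector_mult_scaleR inner_add_left
        inner_add_right inner_commute power2_eq_square algebra_simps)
  finally show "0 \<le> 2*t*(w \<bullet> (M *v v)) + t^2*(w \<bullet> (M *v w))" .
qed

lemma sym_mat_eigenvector_in_subspace:
  fixes A :: "real^'n^'n"
  assumes sym: "sym_mat A" and S: "subspace S" and inv: "\<And>x. x \<in> S \<Longrightarrow> A *v x \<in> S"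
    and "x0 \<in> S" "x0 \<noteq> 0"
  obtains v \<mu> where "v \<in> S" "norm v = 1" "A *v v = \<mu> *\<^sub>R v"
proof -
  define K where "K = S \<inter> sphere 0 1"
  have unit: "(1/norm x) *\<^sub>R x \<in> K" if "x \<in> S" "x \<noteq> 0" for x
    using that S unfolding K_def by (auto simp: subspace_scale)
  have "compact K" unfolding K_def
    by (metis Int_commute closed_subspace compact_Int_closed compact_sphere S)
  moreover have "K \<noteq> {}" using unit \<open>x0 \<in> S\<close> \<open>x0 \<noteq> 0\<close> by blast
  moreover have "continuous_on K (\<lambda>x. x \<bullet> (A *v x))"
    by (intro continuous_on_inner continuous_on_id matrix_vector_mult_linear_continuous_on)
  ultimately obtain v where v: "v \<in> K" and max: "\<And>y. y \<in> K \<Longrightarrow> y \<bullet> (A *v y) \<le> v \<bullet> (A *v v)"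
    using continuous_attains_sup[of K "\<lambda>x. x \<bullet> (A *v x)"] by blast
  define m where "m = v \<bullet> (A *v v)"
  have "v \<in> S" and "norm v = 1" using v by (auto simp: K_def)
  \<comment> \<open>\<open>v\<close> maximises the Rayleigh quotient on \<open>S\<close>, so \<open>m I - A\<close> is positive semidefinite
    on \<open>S\<close> and its quadratic form vanishes at \<open>v\<close>.\<close>
  define M where "M = m *\<^sub>R mat 1 - A"
  have symM: "sym_mat M"
    using sym unfolding M_def sym_mat_def by (simp add: transpose_def vec_eq_iff mat_def)
  have psdM: "0 \<le> x \<bullet> (M *v x)" if "x \<in> S" for x
  proof (cases "x = 0")
    case False
    have "((1/norm x) *\<^sub>R x) \<bullet> (A *v ((1/norm x) *\<^sub>R x)) \<le> m"
      using max unit[OF that False] m_def by blast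
    hence "x \<bullet> (A *v x) \<le> m * (norm x)^2"
      using False by (simp add: matrix_vector_mult_scaleR power2_eq_square field_simps)
    thus ?thesis unfolding M_def
      by (simp add: matrix_vector_mult_diff_rdistrib inner_diff_right
          scaleR_matrix_vector_assoc[symmetric] power2_norm_eq_inner)
  qed simp
  have "v \<bullet> (M *v v) = 0" using \<open>norm v = 1\<close> unfolding M_def m_def
    by (simp add: matrix_vector_mult_diff_rdistrib inner_diff_right
        scaleR_matrix_vector_assoc[symmetric] power2_norm_eq_inner[symmetric])
  moreover have "M *v v \<in> S" unfolding M_def using \<open>v \<in> S\<close> inv S
    by (simp add: matrix_vector_mult_diff_rdistrib scaleR_matrix_vector_assoc[symmetric]
        subspace_diff subspace_scale)
  ultimately have "(M *v v) \<bullet> (M *v v) = 0"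
    using psd_on_subspace_zero_imp_orthogonal[OF symM S \<open>v \<in> S\<close> _ psdM] by blast
  hence "A *v v = m *\<^sub>R v" unfolding M_def
    by (simp add: matrix_vector_mult_diff_rdistrib scaleR_matrix_vector_assoc[symmetric])
  thus ?thesis using that \<open>v \<in> S\<close> \<open>norm v = 1\<close> by blast
qed

lemma sym_mat_orthonormal_eigenbasis_subspace:
  fixes A :: "real^'n^'n"
  assumes sym: "sym_mat A"
  shows "subspace S \<Longrightarrow> (\<And>x. x \<in> S \<Longrightarrow> A *v x \<in> S) \<Longrightarrow>
    \<exists>B. B \<subseteq> S \<and> S \<subseteq> span B \<and> pairwise orthogonal B \<and>
        (\<forall>b\<in>B. norm b = 1 \<and> (\<exists>\<mu>. A *v b = \<mu> *\<^sub>R b))"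
proof (induction "dim S" arbitrary: S rule: less_induct)
  case less
  show ?case
  proof (cases "S \<subseteq> {0}")
    case True
    then show ?thesis by (intro exI[of _ "{}"]) auto
  next
    case False
    then obtain x0 where "x0 \<in> S" "x0 \<noteq> 0" by auto
    then obtain v \<mu> where v: "v \<in> S" "norm v = 1" "A *v v = \<mu> *\<^sub>R v"
      using sym_mat_eigenvector_in_subspace[OF sym less.prems] by blast
    define S' where "S' = {x \<in> S. v \<bullet> x = 0}"
    have "subspace S'" unfolding S'_def using less.prems(1)
      by (auto simp: subspace_def inner_add_right)
    moreover have "A *v x \<in> S'" if "x \<in> S'" for x
      using that less.prems(2) sym_mat_inner_commute[OF sym, of v x] v(3)
      unfolding S'_def by auto
    moreover have "dim S' < dim S"
    proof -
      have "S' \<subset> S" using v unfolding S'_def by (force simp: norm_eq_1)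
      thus ?thesis using dim_psubset \<open>subspace S'\<close> less.prems(1) by (metis span_eq_iff)
    qed
    ultimately obtain B' where B': "B' \<subseteq> S'" "S' \<subseteq> span B'" "pairwise orthogonal B'"
      "\<forall>b\<in>B'. norm b = 1 \<and> (\<exists>\<mu>. A *v b = \<mu> *\<^sub>R b)"
      using less.hyps by blast
    have "S \<subseteq> span (insert v B')"
    proof
      fix x assume "x \<in> S"
      have "x - (v \<bullet> x) *\<^sub>R v \<in> S'" unfolding S'_def using \<open>x \<in> S\<close> v less.prems(1)
        by (auto simp: subspace_diff subspace_scale inner_diff_right
            power2_norm_eq_inner[symmetric])
      hence "x - (v \<bullet> x) *\<^sub>R v \<in> span (insert v B')"
        using B'(2) by (meson span_mono subset_insertI subsetD)
      moreover have "(v \<bullet> x) *\<^sub>R v \<in> span (insert v B')" by (simp add: span_base span_scale)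
      ultimately show "x \<in> span (insert v B')" using span_add by fastforce
    qed
    moreover have "pairwise orthogonal (insert v B')"
      using B'(1,3) unfolding S'_def pairwise_insert orthogonal_def by (auto simp: inner_commute)
    ultimately show ?thesis
      using B' v unfolding S'_def by (intro exI[of _ "insert v B'"]) auto
  qed
qed

theorem sym_mat_spectral:
  fixes A :: "real^'n^'n"
  assumes sym: "sym_mat A"
  obtains Q d where "orthogonal_matrix Q" "A = Q ** diag_mat d ** transpose Q"
proof -
  obtain B where B: "UNIV \<subseteq> span B" "pairwise orthogonal B"
    "\<forall>b\<in>B. norm b = 1 \<and> (\<exists>\<mu>. A *v b = \<mu> *\<^sub>R b)"
    using sym_mat_orthonormal_eigenbasis_subspace[OF sym, of UNIV] by auto
  have "independent B" using B(2,3) pairwise_orthogonal_independent by force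
  hence "card B = CARD('n)" using basis_card_eq_dim[OF _ B(1)] by simp
  moreover have "finite B" using \<open>independent B\<close> independent_bound by blast
  ultimately obtain f where f: "bij_betw f (UNIV::'n set) B"
    using finite_same_card_bij[OF finite_class.finite_UNIV] by metis
  have fB: "f j \<in> B" for j using f by (auto simp: bij_betw_def)
  define Q where "Q = (\<chi> i j. f j $ i)"
  define d where "d = (\<chi> j. SOME \<mu>. A *v f j = \<mu> *\<^sub>R f j)"
  have eig: "A *v f j = d$j *\<^sub>R f j" for j
    unfolding d_def using someI_ex[of "\<lambda>\<mu>. A *v f j = \<mu> *\<^sub>R f j"] B(3) fB by auto
  have "orthogonal_matrix Q"
    unfolding orthogonal_matrix_orthonormal_columns Q_def column_def
    using B fB f by (auto simp: pairwise_def bij_betw_def inj_on_def) metis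
  moreover have "A ** Q = Q ** diag_mat d"
    using eig unfolding Q_def diag_mat_def
    by (simp add: vec_eq_iff matrix_matrix_mult_def matrix_vector_mult_def if_distrib
        mult.commute cong: if_cong)
  ultimately have "A = Q ** diag_mat d ** transpose Q"
    unfolding orthogonal_matrix_def by (metis matrix_mul_assoc matrix_mul_rid)
  thus ?thesis using that \<open>orthogonal_matrix Q\<close> by blast
qed

section \<open>Diagonal matrices and congruence\<close>

lemma diag_mat_nth [simp]: "diag_mat d $ i $ j = (if i = j then d$i else 0)"
  by (simp add: diag_mat_def)

lemma diag_mat_mult_vec: "diag_mat d *v x = (\<chi> i. d$i * x$i)"
  by (simp add: vec_eq_iff matrix_vector_mult_def if_distrib[of "\<lambda>y. y * _"] cong: if_cong)

lemma quadratic_form_diag_mat: "x \<bullet> (diag_mat d *v x) = (\<Sum>i\<in>UNIV. d$i * (x$i)^2)"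
  by (simp add: diag_mat_mult_vec inner_vec_def power2_eq_square mult_ac)

lemma transpose_diag_mat [simp]: "transpose (diag_mat d) = diag_mat d"
  by (simp add: vec_eq_iff transpose_def)

lemma diag_mat_mult: "diag_mat a ** diag_mat b = diag_mat (\<chi> i. a$i * b$i)"
  unfolding matrix_eq by (simp add: matrix_vector_mul_assoc[symmetric] diag_mat_mult_vec mult.assoc)

lemma det_diag_mat: "det (diag_mat d) = (\<Prod>i\<in>UNIV. d$i)"
  by (subst det_diagonal) auto

lemma quadratic_form_axis: "axis i 1 \<bullet> ((X::real^'n^'n) *v axis i 1) = X$i$i"
  by (simp add: matrix_vector_mult_basis inner_axis' column_def)

lemma psd_diag_nonneg: "psd X \<Longrightarrow> 0 \<le> X$i$i"
  unfolding psd_def by (metis quadratic_form_axis)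

lemma pd_diag_pos: "pd X \<Longrightarrow> 0 < X$i$i"
  unfolding pd_def by (metis quadratic_form_axis axis_eq_0_iff zero_neq_one)

lemma psd_diag_mat_iff: "psd (diag_mat d) \<longleftrightarrow> (\<forall>i. 0 \<le> d$i)"
proof
  assume "\<forall>i. 0 \<le> d$i"
  thus "psd (diag_mat d)"
    unfolding psd_def sym_mat_def by (simp add: quadratic_form_diag_mat sum_nonneg)
qed (metis psd_diag_nonneg diag_mat_nth)

lemma pd_diag_mat_iff: "pd (diag_mat d) \<longleftrightarrow> (\<forall>i. 0 < d$i)"
proof
  assume d: "\<forall>i. 0 < d$i"
  show "pd (diag_mat d)" unfolding pd_def sym_mat_def
  proof (intro conjI allI impI)
    fix x :: "real^'a" assume "x \<noteq> 0"
    then obtain i where "x$i \<noteq> 0" by (auto simp: vec_eq_iff)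
    hence "0 < d$i * (x$i)^2" using d by simp
    also have "\<dots> \<le> (\<Sum>j\<in>UNIV. d$j * (x$j)^2)"
      using d by (intro member_le_sum) (simp_all add: less_imp_le mult_nonneg_nonneg)
    finally show "0 < x \<bullet> (diag_mat d *v x)" by (simp add: quadratic_form_diag_mat)
  qed simp
qed (metis pd_diag_pos diag_mat_nth)

lemma psd_add: "psd X \<Longrightarrow> psd Y \<Longrightarrow> psd (X + Y)"
  unfolding psd_def sym_mat_def
  by (simp add: transpose_def vec_eq_iff matrix_vector_mult_add_rdistrib inner_add_right)

lemma psd_scaleR: "psd X \<Longrightarrow> 0 \<le> c \<Longrightarrow> psd (c *\<^sub>R X)"
  unfolding psd_def sym_mat_def
  by (simp add: transpose_scalar scaleR_matrix_vector_assoc[symmetric])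

lemma pd_scaleR: "pd X \<Longrightarrow> 0 < c \<Longrightarrow> pd (c *\<^sub>R X)"
  unfolding pd_def sym_mat_def
  by (simp add: transpose_scalar scaleR_matrix_vector_assoc[symmetric])

lemma pd_scaleR_iff: "0 < c \<Longrightarrow> pd (c *\<^sub>R X) \<longleftrightarrow> pd X"
  using pd_scaleR[of "c *\<^sub>R X" "1/c"] pd_scaleR[of X c] by auto

lemma matrix_add_rdistrib: "(A + B) ** C = A ** C + B ** (C::real^'n^'m)"
  by (simp add: vec_eq_iff matrix_matrix_mult_def sum.distrib distrib_right)

lemma matrix_diff_rdistrib: "(A - B) ** C = A ** C - B ** (C::real^'n^'m)"
  by (simp add: vec_eq_iff matrix_matrix_mult_def sum_subtractf left_diff_distrib)

lemma matrix_diff_ldistrib: "C ** (A - B) = C ** A - C ** (B::real^'n^'m)"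
  by (simp add: vec_eq_iff matrix_matrix_mult_def sum_subtractf right_diff_distrib)

lemma matrix_sandwich_add: "G ** (X + Y) ** H = G ** X ** H + G ** Y ** (H::real^'n^'n)"
  by (simp only: matrix_add_ldistrib matrix_add_rdistrib)

lemma matrix_sandwich_diff: "G ** (X - Y) ** H = G ** X ** H - G ** Y ** (H::real^'n^'n)"
  by (simp only: matrix_diff_ldistrib matrix_diff_rdistrib)

lemma matrix_sandwich_scaleR: "G ** (c *\<^sub>R X) ** H = c *\<^sub>R (G ** X ** (H::real^'n^'n))"
  by (simp add: matrix_scalar_ac scalar_matrix_assoc)

lemma inner_matrix_vector_transpose:
  fixes G :: "real^'n^'m" and x :: "real^'m"
  shows "x \<bullet> (G *v y) = (transpose G *v x) \<bullet> y"
  by (simp add: dot_lmul_matrix)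

lemma quadratic_form_congruence:
  fixes G :: "real^'n^'m" and X :: "real^'n^'n"
  shows "x \<bullet> ((G ** X ** transpose G) *v x) = (transpose G *v x) \<bullet> (X *v (transpose G *v x))"
proof -
  have "(G ** X ** transpose G) *v x = G *v (X *v (transpose G *v x))"
    by (simp only: matrix_vector_mul_assoc matrix_mul_assoc)
  thus ?thesis by (simp only: inner_matrix_vector_transpose[of x G])
qed

lemma sym_mat_congruence: "sym_mat X \<Longrightarrow> sym_mat (G ** X ** transpose G)"
  unfolding sym_mat_def by (simp only: matrix_transpose_mul transpose_transpose matrix_mul_assoc)

lemma psd_congruence: "psd X \<Longrightarrow> psd (G ** X ** transpose G)"
  unfolding psd_def quadratic_form_congruence by (simp add: sym_mat_congruence)

lemma pd_congruence:
  fixes G X :: "real^'n^'n"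
  assumes "pd X" "invertible G"
  shows "pd (G ** X ** transpose G)"
proof -
  have "inj ((*v) (transpose G))"
    by (rule inj_matrix_vector_mult[OF transpose_invertible[OF assms(2)]])
  hence "transpose G *v x \<noteq> 0" if "x \<noteq> 0" for x
    using that by (metis injD matrix_vector_mult_0_right)
  thus ?thesis using assms(1) unfolding pd_def quadratic_form_congruence
    by (simp add: sym_mat_congruence)
qed

lemma invertible_matrix_inv:
  fixes G :: "real^'n^'n"
  assumes "invertible G"
  shows "G ** matrix_inv G = mat 1" "matrix_inv G ** G = mat 1"
  using someI_ex[OF assms[unfolded invertible_def]] unfolding matrix_inv_def by auto

lemma matrix_inv_invertible:
  fixes G :: "real^'n^'n"
  shows "invertible G \<Longrightarrow> invertible (matrix_inv G)"
  using invertible_matrix_inv unfolding invertible_def by blast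

lemma matrix_inv_unique:
  fixes G H :: "real^'n^'n"
  assumes "G ** H = mat 1"
  shows "matrix_inv G = H"
proof -
  have "invertible G" using assms invertible_right_inverse by blast
  have "matrix_inv G = (matrix_inv G ** G) ** H"
    by (simp add: matrix_mul_assoc[symmetric] assms)
  also have "\<dots> = H" by (simp add: invertible_matrix_inv(2)[OF \<open>invertible G\<close>])
  finally show ?thesis .
qed

lemma congruence_cancel:
  fixes G H X :: "real^'n^'n"
  assumes "H ** G = mat 1"
  shows "H ** (G ** X ** transpose G) ** transpose H = X"
proof -
  have "transpose G ** transpose H = mat 1"
    using assms by (metis matrix_transpose_mul transpose_mat)
  have "H ** (G ** X ** transpose G) ** transpose H = (H ** G) ** X ** (transpose G ** transpose H)"
    by (simp only: matrix_mul_assoc)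
  also have "\<dots> = X" using assms \<open>transpose G ** transpose H = mat 1\<close> by simp
  finally show ?thesis .
qed

lemma psd_congruence_iff:
  fixes G X :: "real^'n^'n"
  assumes "invertible G"
  shows "psd (G ** X ** transpose G) \<longleftrightarrow> psd X"
  using psd_congruence[of "G ** X ** transpose G" "matrix_inv G"] psd_congruence[of X G]
    congruence_cancel[OF invertible_matrix_inv(2)[OF assms]] by auto

lemma pd_congruence_iff:
  fixes G X :: "real^'n^'n"
  assumes "invertible G"
  shows "pd (G ** X ** transpose G) \<longleftrightarrow> pd X"
  using pd_congruence[of "G ** X ** transpose G" "matrix_inv G"] pd_congruence[of X G]
    congruence_cancel[OF invertible_matrix_inv(2)[OF assms]]
    matrix_inv_invertible[OF assms] assms by auto

lemma det_congruence: "det (G ** X ** transpose G) = (det G)^2 * det (X::real^'n^'n)"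
  by (simp add: det_mul power2_eq_square)

lemma orthogonal_matrix_invertible: "orthogonal_matrix Q \<Longrightarrow> invertible Q"
  unfolding orthogonal_matrix_def invertible_def by blast

lemma orthogonal_congruence_mult:
  fixes Q :: "real^'n^'n"
  assumes "orthogonal_matrix Q"
  shows "(Q ** D ** transpose Q) ** (Q ** E ** transpose Q) = Q ** (D ** E) ** transpose Q"
proof -
  have "(Q ** D ** transpose Q) ** (Q ** E ** transpose Q) = Q ** D ** (transpose Q ** Q) ** E ** transpose Q"
    by (simp add: matrix_mul_assoc)
  thus ?thesis using assms unfolding orthogonal_matrix_def by (simp add: matrix_mul_assoc)
qed

lemma trace_orthogonal_congruence:
  fixes Q :: "real^'n^'n"
  assumes "orthogonal_matrix Q"
  shows "trace (Q ** D ** transpose Q) = trace D"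
proof -
  have "trace (Q ** D ** transpose Q) = trace (transpose Q ** (Q ** D))" by (rule trace_mul_sym)
  thus ?thesis using assms unfolding orthogonal_matrix_def by (simp add: matrix_mul_assoc)
qed

lemma inner_eq_trace: "X \<bullet> Y = trace (transpose X ** (Y::real^'n^'n))"
  unfolding inner_vec_def trace_def
  by (simp add: matrix_matrix_mult_def transpose_def) (rule sum.swap)

lemma norm_orthogonal_congruence:
  fixes Q :: "real^'n^'n"
  assumes "orthogonal_matrix Q"
  shows "norm (Q ** X ** transpose Q) = norm X"
proof -
  have "transpose (Q ** X ** transpose Q) = Q ** transpose X ** transpose Q"
    by (simp add: matrix_transpose_mul matrix_mul_assoc)
  thus ?thesis
    unfolding norm_eq_sqrt_inner inner_eq_trace
    by (simp add: orthogonal_congruence_mult[OF assms] trace_orthogonal_congruence[OF assms])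
qed

lemma psd_orthogonal_diag_iff:
  "orthogonal_matrix Q \<Longrightarrow> psd (Q ** diag_mat d ** transpose Q) \<longleftrightarrow> (\<forall>i. 0 \<le> d$i)"
  by (simp add: psd_congruence_iff orthogonal_matrix_invertible psd_diag_mat_iff)

lemma pd_orthogonal_diag_iff:
  "orthogonal_matrix Q \<Longrightarrow> pd (Q ** diag_mat d ** transpose Q) \<longleftrightarrow> (\<forall>i. 0 < d$i)"
  by (simp add: pd_congruence_iff orthogonal_matrix_invertible pd_diag_mat_iff)

lemma det_orthogonal_congruence:
  "orthogonal_matrix Q \<Longrightarrow> det (Q ** X ** transpose Q) = det (X::real^'n^'n)"
  using det_orthogonal_matrix[of Q] by (auto simp: det_congruence)

section \<open>Log-determinant, square root and projection onto the PSD cone\<close>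

lemma pd_spectral:
  assumes "pd X"
  obtains Q d where "orthogonal_matrix Q" "X = Q ** diag_mat d ** transpose Q" "\<forall>i. 0 < d$i"
  by (metis assms pd_def sym_mat_spectral pd_orthogonal_diag_iff)

lemma trace_diag_mat: "trace (diag_mat d) = (\<Sum>i\<in>UNIV. d$i)"
  by (simp add: trace_def)

lemma pd_det_pos: "pd X \<Longrightarrow> 0 < det X"
  by (metis pd_spectral det_orthogonal_congruence det_diag_mat prod_pos)

lemma ln_det_le_trace:
  fixes X :: "real^'n^'n"
  assumes "pd X"
  shows "ln (det X) \<le> trace X - real CARD('n)"
proof -
  obtain Q d where Q: "orthogonal_matrix Q" "X = Q ** diag_mat d ** transpose Q" and d: "\<forall>i. 0 < d$i"
    using pd_spectral[OF assms] .
  have "ln (det X) = (\<Sum>i\<in>UNIV. ln (d$i))"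
    using d by (simp add: Q det_orthogonal_congruence det_diag_mat ln_prod less_imp_neq[symmetric])
  also have "\<dots> \<le> (\<Sum>i\<in>UNIV. d$i - 1)"
    using d by (intro sum_mono) (simp add: ln_le_minus_one)
  also have "\<dots> = trace X - real CARD('n)"
    by (simp add: Q trace_orthogonal_congruence trace_diag_mat sum_subtractf)
  finally show ?thesis .
qed

lemma diag_mat_sandwich_nth: "(diag_mat a ** X ** diag_mat b) $ i $ j = a$i * X$i$j * b$j"
  by (simp add: matrix_matrix_mult_def if_distrib[of "\<lambda>y. y * _"] if_distrib[of "\<lambda>y. _ * y"]
      cong: if_cong)

lemma ln_det_le_tangent_diag:
  fixes X :: "real^'n^'n"
  assumes "pd X" and d: "\<forall>i. 0 < d$i"
  shows "ln (det X) \<le> ln (det (diag_mat d)) + (\<Sum>i\<in>UNIV. (X$i$i - d$i) / d$i)"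
proof -
  have d0: "d$i \<noteq> 0" for i using d by (metis less_irrefl)
  define E where "E = diag_mat (\<chi> i. 1 / sqrt (d$i))"
  have "E ** diag_mat (\<chi> i. sqrt (d$i)) = mat 1"
    unfolding E_def diag_mat_mult by (simp add: vec_eq_iff mat_def diag_mat_def d0)
  hence "pd (E ** X ** transpose E)"
    using pd_congruence[OF assms(1)] invertible_right_inverse by blast
  have "(det E)^2 = 1 / det (diag_mat d)"
    using d unfolding E_def det_diag_mat
    by (simp add: prod_power_distrib power_divide less_imp_le prod_dividef[of "\<lambda>_. 1", simplified])
  hence "det (E ** X ** transpose E) = det X / det (diag_mat d)"
    by (simp add: det_congruence)
  moreover have "trace (E ** X ** transpose E) = (\<Sum>i\<in>UNIV. X$i$i / d$i)"
    using d unfolding trace_def E_def transpose_diag_mat diag_mat_sandwich_nth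
    by (intro sum.cong) (auto simp: field_simps less_imp_le)
  moreover have "0 < det (diag_mat d)" using d by (simp add: det_diag_mat prod_pos)
  ultimately show ?thesis
    using ln_det_le_trace[OF \<open>pd (E ** X ** transpose E)\<close>] pd_det_pos[OF assms(1)] d
    by (simp add: ln_div diff_divide_distrib sum_subtractf less_imp_neq[symmetric])
qed

lemma diag_mat_mult_axis: "diag_mat a *v axis j 1 = a$j *\<^sub>R axis j 1"
  by (simp add: diag_mat_mult_vec vec_eq_iff axis_def)

lemma psd_sqrt_of_diag:
  fixes T :: "real^'n^'n"
  assumes psdT: "psd T" and TT: "T ** T = diag_mat a"
  shows "T = diag_mat (\<chi> i. sqrt (a$i))"
proof -
  have "T *v axis j 1 = sqrt (a$j) *\<^sub>R axis j 1" for j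
  proof -
    define e where "e = (axis j 1 :: real^'n)"
    have TTe: "T *v (T *v e) = a$j *\<^sub>R e"
      unfolding e_def by (simp add: matrix_vector_mul_assoc TT diag_mat_mult_axis)
    have "(T *v e) \<bullet> (T *v e) = a$j"
      using sym_mat_inner_commute[of T e "T *v e"] psdT TTe
      by (simp add: psd_def e_def inner_axis_axis)
    hence "0 \<le> a$j" by (metis inner_ge_zero)
    define \<sigma> where "\<sigma> = sqrt (a$j)"
    have "0 \<le> \<sigma>" "\<sigma> * \<sigma> = a$j" using \<open>0 \<le> a$j\<close> unfolding \<sigma>_def by auto
    \<comment> \<open>\<open>T\<close> acts as \<open>-\<sigma>\<close> on \<open>u\<close>, which positive semidefiniteness only allows for \<open>u = 0\<close>.\<close>
    define u where "u = T *v e - \<sigma> *\<^sub>R e"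
    have "T *v u = - \<sigma> *\<^sub>R u"
      unfolding u_def using TTe \<open>\<sigma> * \<sigma> = a$j\<close>
      by (simp add: algebra_simps matrix_vector_mult_scaleR)
    moreover have "0 \<le> u \<bullet> (T *v u)" using psdT unfolding psd_def by blast
    ultimately have "\<sigma> * (u \<bullet> u) \<le> 0" by simp
    moreover have "\<sigma> = 0 \<Longrightarrow> T *v e = 0"
      using \<open>(T *v e) \<bullet> (T *v e) = a$j\<close> \<open>\<sigma> * \<sigma> = a$j\<close> by simp
    ultimately have "u = 0" using \<open>0 \<le> \<sigma>\<close> unfolding u_def
      by (metis inner_gt_zero_iff mult_pos_pos not_le order_neq_le_trans scale_zero_left
          diff_zero)
    thus ?thesis unfolding u_def e_def \<sigma>_def by simp
  qed
  hence "column j T = column j (diag_mat (\<chi> i. sqrt (a$i)))" for j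
    by (simp add: matrix_vector_mult_basis[symmetric] diag_mat_mult_axis)
  thus ?thesis by (simp add: vec_eq_iff column_def)
qed

lemma msqrt_orthogonal_congruence:
  fixes Q :: "real^'n^'n"
  assumes Q: "orthogonal_matrix Q" and a: "\<forall>i. 0 \<le> a$i"
  shows "msqrt (Q ** diag_mat a ** transpose Q) = Q ** diag_mat (\<chi> i. sqrt (a$i)) ** transpose Q"
  unfolding msqrt_def
proof (rule the_equality)
  let ?S = "Q ** diag_mat (\<chi> i. sqrt (a$i)) ** transpose Q"
  have "diag_mat (\<chi> i. sqrt (a$i)) ** diag_mat (\<chi> i. sqrt (a$i)) = diag_mat a"
    using a by (simp add: diag_mat_mult vec_eq_iff)
  thus "psd ?S \<and> ?S ** ?S = Q ** diag_mat a ** transpose Q"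
    using a by (simp add: psd_orthogonal_diag_iff[OF Q] orthogonal_congruence_mult[OF Q])
next
  fix T assume T: "psd T \<and> T ** T = Q ** diag_mat a ** transpose Q"
  have QT: "transpose Q ** Q = mat 1" "Q ** transpose Q = mat 1"
    using Q unfolding orthogonal_matrix_def by auto
  define T' where "T' = transpose Q ** T ** transpose (transpose Q)"
  have "T' ** T' = transpose Q ** (T ** T) ** transpose (transpose Q)"
    unfolding T'_def by (rule orthogonal_congruence_mult) (simp add: Q)
  also have "\<dots> = diag_mat a" using T congruence_cancel[OF QT(1)] by simp
  finally have "T' = diag_mat (\<chi> i. sqrt (a$i))"
    using T psd_congruence psd_sqrt_of_diag unfolding T'_def by blast
  moreover have "T = Q ** T' ** transpose Q"
    unfolding T'_def using congruence_cancel[OF QT(2)] by simp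
  ultimately show "T = Q ** diag_mat (\<chi> i. sqrt (a$i)) ** transpose Q" by simp
qed

lemma pd_msqrt:
  assumes "pd A"
  shows "pd (msqrt A)" "msqrt A ** msqrt A = A"
proof -
  obtain Q a where Q: "orthogonal_matrix Q" "A = Q ** diag_mat a ** transpose Q" and a: "\<forall>i. 0 < a$i"
    using pd_spectral[OF assms] .
  have "msqrt A = Q ** diag_mat (\<chi> i. sqrt (a$i)) ** transpose Q"
    using msqrt_orthogonal_congruence[OF Q(1)] a Q(2) by (simp add: less_imp_le)
  moreover have "diag_mat (\<chi> i. sqrt (a$i)) ** diag_mat (\<chi> i. sqrt (a$i)) = diag_mat a"
    using a by (simp add: diag_mat_mult vec_eq_iff less_imp_le)
  ultimately show "pd (msqrt A)" "msqrt A ** msqrt A = A"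
    using a by (simp_all add: pd_orthogonal_diag_iff[OF Q(1)] orthogonal_congruence_mult[OF Q(1)] Q(2))
qed

lemma psd_nearest_unique:
  fixes M P1 P2 :: "real^'n^'n"
  assumes "psd P1" "psd P2"
    and min1: "\<And>Q. psd Q \<Longrightarrow> norm (M - P1) \<le> norm (M - Q)"
    and min2: "\<And>Q. psd Q \<Longrightarrow> norm (M - P2) \<le> norm (M - Q)"
  shows "P1 = P2"
proof -
  define a where "a = M - P1"
  define b where "b = M - P2"
  have "norm a = norm b" using assms unfolding a_def b_def by (meson order_antisym)
  have "psd ((1/2) *\<^sub>R (P1 + P2))" by (simp add: psd_scaleR psd_add assms(1,2))
  hence "norm a \<le> norm (M - (1/2) *\<^sub>R (P1 + P2))" using min1 unfolding a_def by blast
  also have "M - (1/2) *\<^sub>R (P1 + P2) = (1/2) *\<^sub>R (a + b)"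
    unfolding a_def b_def by (simp add: algebra_simps scaleR_2[symmetric])
  finally have "2 * norm a \<le> norm (a + b)" by simp
  hence "(2 * norm a)^2 \<le> (norm (a + b))^2" by (rule power_mono) simp
  moreover have "(norm (a - b))^2 + (norm (a + b))^2 = 2 * (norm a)^2 + 2 * (norm b)^2"
    unfolding power2_norm_eq_inner
    by (simp add: inner_add_left inner_add_right inner_diff_left inner_diff_right inner_commute)
  moreover have "(2 * norm a)^2 = 2 * (norm a)^2 + 2 * (norm b)^2"
    using \<open>norm a = norm b\<close> by (simp add: power_mult_distrib)
  ultimately have "(norm (a - b))^2 \<le> 0" by linarith
  thus ?thesis unfolding a_def b_def by simp
qed

lemma inner_eq_double_sum: "X \<bullet> Y = (\<Sum>i\<in>UNIV. \<Sum>j\<in>UNIV. X$i$j * Y$i$j)"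
  by (simp add: inner_vec_def)

lemma sum_sq_diag_le_norm_sq: "(\<Sum>i\<in>UNIV. (X$i$i)^2) \<le> (norm (X::real^'n^'n))^2"
proof -
  have "(X$i$i)^2 \<le> (\<Sum>j\<in>UNIV. X$i$j * X$i$j)" for i
    using member_le_sum[of i UNIV "\<lambda>j. X$i$j * X$i$j"] by (simp add: power2_eq_square)
  hence "(\<Sum>i\<in>UNIV. (X$i$i)^2) \<le> (\<Sum>i\<in>UNIV. \<Sum>j\<in>UNIV. X$i$j * X$i$j)" by (rule sum_mono)
  thus ?thesis by (simp add: power2_norm_eq_inner inner_eq_double_sum)
qed

lemma norm_sq_diag_mat: "(norm (diag_mat v))^2 = (\<Sum>i\<in>UNIV. (v$i)^2)"
  unfolding power2_norm_eq_inner inner_eq_double_sum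
  by (simp add: if_distrib[of "\<lambda>y. y * _"] power2_eq_square cong: if_cong)

lemma diag_mat_diff: "diag_mat a - diag_mat b = diag_mat (a - b)"
  by (simp add: vec_eq_iff)

lemma proj_psd_orthogonal_congruence:
  fixes Q :: "real^'n^'n"
  assumes Q: "orthogonal_matrix Q"
  shows "proj_psd (Q ** diag_mat \<mu> ** transpose Q) = Q ** diag_mat (\<chi> i. max (\<mu>$i) 0) ** transpose Q"
  unfolding proj_psd_def
proof (rule the_equality)
  let ?M = "Q ** diag_mat \<mu> ** transpose Q"
  let ?P = "Q ** diag_mat (\<chi> i. max (\<mu>$i) 0) ** transpose Q"
  have QT: "transpose Q ** Q = mat 1" "Q ** transpose Q = mat 1"
    using Q unfolding orthogonal_matrix_def by auto
  have "psd ?P" by (simp add: psd_orthogonal_diag_iff[OF Q])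
  moreover have min: "norm (?M - ?P) \<le> norm (?M - R)" if "psd R" for R
  proof -
    define R' where "R' = transpose Q ** R ** transpose (transpose Q)"
    have "psd R'" unfolding R'_def by (rule psd_congruence[OF that])
    have R: "R = Q ** R' ** transpose Q"
      unfolding R'_def using congruence_cancel[OF QT(2)] by simp
    have "(norm (?M - ?P))^2 = (\<Sum>i\<in>UNIV. (\<mu>$i - max (\<mu>$i) 0)^2)"
      by (simp add: matrix_sandwich_diff[symmetric] norm_orthogonal_congruence[OF Q]
          diag_mat_diff norm_sq_diag_mat)
    also have "\<dots> \<le> (\<Sum>i\<in>UNIV. ((diag_mat \<mu> - R')$i$i)^2)"
    proof (rule sum_mono)
      fix i
      have "0 \<le> R'$i$i" by (rule psd_diag_nonneg[OF \<open>psd R'\<close>])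
      thus "(\<mu>$i - max (\<mu>$i) 0)^2 \<le> ((diag_mat \<mu> - R')$i$i)^2"
        by (cases "0 \<le> \<mu>$i") (simp_all add: abs_le_square_iff[symmetric])
    qed
    also have "\<dots> \<le> (norm (diag_mat \<mu> - R'))^2" by (rule sum_sq_diag_le_norm_sq)
    also have "\<dots> = (norm (?M - R))^2"
      by (simp add: R matrix_sandwich_diff[symmetric] norm_orthogonal_congruence[OF Q])
    finally show ?thesis by (rule power2_le_imp_le) simp
  qed
  ultimately show "psd ?P \<and> (\<forall>R. psd R \<longrightarrow> norm (?M - ?P) \<le> norm (?M - R))" by blast
  fix P assume "psd P \<and> (\<forall>R. psd R \<longrightarrow> norm (?M - P) \<le> norm (?M - R))"
  thus "P = ?P" using psd_nearest_unique[of P ?P ?M] \<open>psd ?P\<close> min by blast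
qed

lemma pd_invertible: "pd X \<Longrightarrow> invertible X"
  using pd_det_pos invertible_det_nz by force

lemma pd_add_psd: "pd X \<Longrightarrow> psd Y \<Longrightarrow> pd (X + Y)"
  unfolding pd_def psd_def sym_mat_def
  by (simp add: transpose_def vec_eq_iff matrix_vector_mult_add_rdistrib inner_add_right
      add_pos_nonneg)

lemma sym_mat_matrix_inv:
  fixes S :: "real^'n^'n"
  assumes "sym_mat S" "invertible S"
  shows "sym_mat (matrix_inv S)"
proof -
  have "S ** transpose (matrix_inv S) = transpose (matrix_inv S ** S)"
    using assms(1) by (simp add: matrix_transpose_mul sym_mat_def)
  also have "\<dots> = mat 1" by (simp add: invertible_matrix_inv(2)[OF assms(2)])
  finally have "matrix_inv S = transpose (matrix_inv S)" by (rule matrix_inv_unique)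
  thus ?thesis unfolding sym_mat_def by simp
qed

lemma pd_sym_simultaneous_congruence:
  fixes A B :: "real^'n^'n"
  assumes "pd A" "sym_mat B"
  obtains R l where "orthogonal_matrix R"
    "msqrt_inv A ** B ** msqrt_inv A = R ** diag_mat l ** transpose R"
    "invertible (msqrt A ** R)"
    "(msqrt A ** R) ** mat 1 ** transpose (msqrt A ** R) = A"
    "(msqrt A ** R) ** diag_mat l ** transpose (msqrt A ** R) = B"
proof -
  let ?S = "msqrt A" and ?Si = "msqrt_inv A"
  have "pd ?S" "?S ** ?S = A" using pd_msqrt[OF assms(1)] by auto
  hence "invertible ?S" "transpose ?S = ?S" by (auto simp: pd_invertible pd_def sym_mat_def)
  have SSi: "?S ** ?Si = mat 1" "?Si ** ?S = mat 1"
    using invertible_matrix_inv[OF \<open>invertible ?S\<close>] unfolding msqrt_inv_def by auto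
  have "sym_mat ?Si"
    using sym_mat_matrix_inv[OF _ \<open>invertible ?S\<close>] \<open>pd ?S\<close> unfolding msqrt_inv_def pd_def by simp
  hence "sym_mat (?Si ** B ** ?Si)"
    using sym_mat_congruence[OF assms(2), of ?Si] unfolding sym_mat_def by simp
  then obtain R l where R: "orthogonal_matrix R" "?Si ** B ** ?Si = R ** diag_mat l ** transpose R"
    using sym_mat_spectral by blast
  have RRt: "R ** transpose R = mat 1" using R(1) unfolding orthogonal_matrix_def by auto
  have Gt: "transpose (?S ** R) = transpose R ** ?S"
    using \<open>transpose ?S = ?S\<close> by (simp add: matrix_transpose_mul)
  have "invertible (?S ** R)"
    using invertible_mult[OF \<open>invertible ?S\<close> orthogonal_matrix_invertible[OF R(1)]] .
  moreover have "(?S ** R) ** mat 1 ** transpose (?S ** R) = A"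
  proof -
    have "(?S ** R) ** mat 1 ** transpose (?S ** R) = ?S ** (R ** transpose R) ** ?S"
      by (simp add: Gt matrix_mul_assoc)
    thus ?thesis using RRt \<open>?S ** ?S = A\<close> by simp
  qed
  moreover have "(?S ** R) ** diag_mat l ** transpose (?S ** R) = B"
  proof -
    have "(?S ** R) ** diag_mat l ** transpose (?S ** R) = ?S ** (R ** diag_mat l ** transpose R) ** ?S"
      by (simp add: Gt matrix_mul_assoc)
    also have "\<dots> = ?S ** (?Si ** B ** ?Si) ** ?S" by (simp add: R(2))
    also have "\<dots> = (?S ** ?Si) ** B ** (?Si ** ?S)" by (simp only: matrix_mul_assoc)
    finally show ?thesis using SSi by simp
  qed
  ultimately show ?thesis using that[OF R] by blast
qed

lemma msqrt_proj_psd_congruence: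
  fixes A B R :: "real^'n^'n"
  assumes "pd A" "orthogonal_matrix R"
    and C: "msqrt_inv A ** B ** msqrt_inv A = R ** diag_mat l ** transpose R"
  shows "msqrt A ** proj_psd (mat 1 - msqrt_inv A ** B ** msqrt_inv A) ** msqrt A
    = (msqrt A ** R) ** diag_mat (\<chi> i. max (1 - l$i) 0) ** transpose (msqrt A ** R)"
proof -
  have "R ** transpose R = mat 1" using assms(2) unfolding orthogonal_matrix_def by auto
  moreover have "diag_mat (\<chi> i. 1 - l$i) = mat 1 - diag_mat l" by (simp add: vec_eq_iff mat_def)
  ultimately have "mat 1 - msqrt_inv A ** B ** msqrt_inv A = R ** diag_mat (\<chi> i. 1 - l$i) ** transpose R"
    unfolding C by (simp add: matrix_sandwich_diff)
  hence "proj_psd (mat 1 - msqrt_inv A ** B ** msqrt_inv A)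
      = R ** diag_mat (\<chi> i. max (1 - l$i) 0) ** transpose R"
    using proj_psd_orthogonal_congruence[OF assms(2)] by simp
  moreover have "transpose (msqrt A ** R) = transpose R ** msqrt A"
    using pd_msqrt(1)[OF assms(1)] by (simp add: matrix_transpose_mul pd_def sym_mat_def)
  ultimately show ?thesis by (simp add: matrix_mul_assoc)
qed

section \<open>The optimisation problem\<close>

definition optimal :: "real \<Rightarrow> real \<Rightarrow> real^'n^'n \<Rightarrow> real^'n^'n \<Rightarrow> real^'n^'n \<Rightarrow> bool" where
  "optimal ki kj A B Y \<longleftrightarrow>
     feasible ki kj A B Y \<and> (\<forall>Z. feasible ki kj A B Z \<longrightarrow> obj ki kj A B Z \<le> obj ki kj A B Y)"

lemma feasible_iff:
  "feasible ki kj A B Y \<longleftrightarrow> psd Y \<and> pd (Y + kj *\<^sub>R B) \<and> pd (ki *\<^sub>R A - Y)"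
  unfolding feasible_def loewner_less_def by simp

lemma feasible_imp_pd:
  assumes "0 < ki" "feasible ki kj A B Y"
  shows "pd A"
proof -
  have "pd ((ki *\<^sub>R A - Y) + Y)" using assms(2) pd_add_psd unfolding feasible_iff by blast
  hence "pd (ki *\<^sub>R A)" by simp
  thus ?thesis using pd_scaleR_iff[OF assms(1)] by blast
qed

lemma feasible_iff_log_det_args:
  assumes "0 < ki" "0 < kj"
  shows "feasible ki kj A B Y \<longleftrightarrow> psd Y \<and> pd (A - (1/ki) *\<^sub>R Y) \<and> pd (B + (1/kj) *\<^sub>R Y)"
proof -
  have "A - (1/ki) *\<^sub>R Y = (1/ki) *\<^sub>R (ki *\<^sub>R A - Y)"
    "B + (1/kj) *\<^sub>R Y = (1/kj) *\<^sub>R (Y + kj *\<^sub>R B)"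
    using assms by (simp_all add: algebra_simps)
  thus ?thesis using assms by (auto simp: feasible_iff pd_scaleR_iff)
qed

lemma feasible_congruence_iff:
  fixes G :: "real^'n^'n"
  assumes "invertible G"
  shows "feasible ki kj (G ** A ** transpose G) (G ** B ** transpose G) (G ** Y ** transpose G)
    \<longleftrightarrow> feasible ki kj A B Y"
  unfolding feasible_iff
  by (simp add: matrix_sandwich_add[symmetric] matrix_sandwich_diff[symmetric]
      matrix_sandwich_scaleR[symmetric] psd_congruence_iff[OF assms] pd_congruence_iff[OF assms])

lemma obj_congruence:
  fixes G :: "real^'n^'n"
  assumes "invertible G" "0 < ki" "0 < kj" "feasible ki kj A B Y"
  shows "obj ki kj (G ** A ** transpose G) (G ** B ** transpose G) (G ** Y ** transpose G)
    = (ki + kj) * ln ((det G)^2) + obj ki kj A B Y"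
proof -
  have "0 < (det G)^2" using assms(1) by (simp add: invertible_det_nz)
  moreover have "0 < det (A - (1/ki) *\<^sub>R Y)" "0 < det (B + (1/kj) *\<^sub>R Y)"
    using assms(4) by (simp_all add: feasible_iff_log_det_args[OF assms(2,3)] pd_det_pos)
  ultimately show ?thesis
    unfolding obj_def
    by (simp add: matrix_sandwich_add[symmetric] matrix_sandwich_diff[symmetric]
        matrix_sandwich_scaleR[symmetric] det_congruence ln_mult algebra_simps)
qed

lemma feasible_congruence_cancel:
  fixes G :: "real^'n^'n"
  assumes "invertible G" "feasible ki kj (G ** A ** transpose G) (G ** B ** transpose G) Y"
  shows "G ** (matrix_inv G ** Y ** transpose (matrix_inv G)) ** transpose G = Y"
    and "feasible ki kj A B (matrix_inv G ** Y ** transpose (matrix_inv G))"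
proof -
  show Y: "G ** (matrix_inv G ** Y ** transpose (matrix_inv G)) ** transpose G = Y"
    using congruence_cancel[OF invertible_matrix_inv(1)[OF assms(1)]] .
  have "feasible ki kj (G ** A ** transpose G) (G ** B ** transpose G)
      (G ** (matrix_inv G ** Y ** transpose (matrix_inv G)) ** transpose G)"
    using assms(2) by (simp only: Y)
  thus "feasible ki kj A B (matrix_inv G ** Y ** transpose (matrix_inv G))"
    by (simp only: feasible_congruence_iff[OF assms(1)])
qed

lemma optimal_congruence:
  fixes G :: "real^'n^'n"
  assumes "invertible G" "0 < ki" "0 < kj" "optimal ki kj A B W"
  shows "optimal ki kj (G ** A ** transpose G) (G ** B ** transpose G) (G ** W ** transpose G)"
  unfolding optimal_def
proof (intro conjI allI impI)
  show "feasible ki kj (G ** A ** transpose G) (G ** B ** transpose G) (G ** W ** transpose G)"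
    using assms(4) by (simp add: optimal_def feasible_congruence_iff[OF assms(1)])
  fix Z assume Z: "feasible ki kj (G ** A ** transpose G) (G ** B ** transpose G) Z"
  define Z' where "Z' = matrix_inv G ** Z ** transpose (matrix_inv G)"
  have Z': "G ** Z' ** transpose G = Z" "feasible ki kj A B Z'"
    using feasible_congruence_cancel[OF assms(1) Z] unfolding Z'_def by auto
  have W: "feasible ki kj A B W" "obj ki kj A B Z' \<le> obj ki kj A B W"
    using assms(4) Z'(2) unfolding optimal_def by auto
  have "obj ki kj (G ** A ** transpose G) (G ** B ** transpose G) Z
      = (ki + kj) * ln ((det G)^2) + obj ki kj A B Z'"
    using obj_congruence[OF assms(1-3) Z'(2)] by (simp only: Z'(1))
  also have "\<dots> \<le> (ki + kj) * ln ((det G)^2) + obj ki kj A B W" using W(2) by simp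
  also have "\<dots> = obj ki kj (G ** A ** transpose G) (G ** B ** transpose G) (G ** W ** transpose G)"
    using obj_congruence[OF assms(1-3) W(1)] by simp
  finally show "obj ki kj (G ** A ** transpose G) (G ** B ** transpose G) Z
      \<le> obj ki kj (G ** A ** transpose G) (G ** B ** transpose G) (G ** W ** transpose G)" .
qed

lemma feasible_diag_coordinate_pos:
  assumes "feasible ki kj (mat 1) (diag_mat l) W"
  shows "0 < ki + kj * l$i"
proof -
  have "0 < (W + kj *\<^sub>R diag_mat l)$i$i" "0 < (ki *\<^sub>R mat 1 - W)$i$i"
    using assms unfolding feasible_iff by (blast intro: pd_diag_pos)+
  thus ?thesis by (simp add: mat_def)
qed

lemma diagonal_coordinate_optimality:
  fixes ki kj l w :: real
  assumes ki: "0 < ki" and kj: "0 < kj" and l: "0 < ki + kj * l" and w: "0 \<le> w"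
  defines "q \<equiv> ki * kj / (ki + kj) * max (1 - l) 0"
  shows "0 < 1 - q / ki" "0 < l + q / kj"
    and "(q - w) / (1 - q / ki) + (w - q) / (l + q / kj) \<le> 0"
proof -
  define s where "s = (ki + kj * l) / (ki + kj)"
  have "0 < s" using l ki kj by (simp add: s_def)
  \<comment> \<open>Either both log-det arguments of the coordinate agree (stationarity), or the
    constraint \<open>W \<succeq> O\<close> is active and \<open>q = 0\<close>.\<close>
  have "(1 - q / ki = s \<and> l + q / kj = s) \<or> (q = 0 \<and> 1 \<le> l)"
  proof (cases "l < 1")
    case True
    have "ki + kj \<noteq> 0" using ki kj by simp
    have "q = ki * kj * (1 - l) / (ki + kj)" using True unfolding q_def by simp
    hence "1 - q / ki = s" "l + q / kj = s"
      using ki kj \<open>ki + kj \<noteq> 0\<close> unfolding s_def by (simp_all add: field_simps)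
    thus ?thesis by simp
  qed (simp add: q_def)
  thus "0 < 1 - q / ki" "0 < l + q / kj" "(q - w) / (1 - q / ki) + (w - q) / (l + q / kj) \<le> 0"
    using \<open>0 < s\<close> w mult_left_mono[of 1 l w]
    by (auto simp: add_divide_distrib[symmetric] divide_le_eq)
qed

lemma diagonal_problem_optimal:
  fixes l :: "real^'n"
  assumes ki: "0 < ki" and kj: "0 < kj" and W0: "feasible ki kj (mat 1) (diag_mat l) W0"
  shows "optimal ki kj (mat 1) (diag_mat l) (diag_mat (\<chi> i. ki * kj / (ki + kj) * max (1 - l$i) 0))"
proof -
  define q where "q = (\<chi> i. ki * kj / (ki + kj) * max (1 - l$i) 0)"
  define u where "u = (\<chi> i. 1 - q$i / ki)"
  define v where "v = (\<chi> i. l$i + q$i / kj)"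
  note coord = diagonal_coordinate_optimality[OF ki kj feasible_diag_coordinate_pos[OF W0]]
  have u: "0 < u$i" and v: "0 < v$i" for i
    using coord[of 0 i] unfolding u_def v_def q_def by auto
  have U: "mat 1 - (1/ki) *\<^sub>R diag_mat q = diag_mat u"
    and V: "diag_mat l + (1/kj) *\<^sub>R diag_mat q = diag_mat v"
    unfolding u_def v_def by (simp_all add: vec_eq_iff mat_def)
  have "feasible ki kj (mat 1) (diag_mat l) (diag_mat q)"
    unfolding feasible_iff_log_det_args[OF ki kj] U V
    using u v ki kj by (simp add: psd_diag_mat_iff pd_diag_mat_iff q_def)
  moreover have "obj ki kj (mat 1) (diag_mat l) W \<le> obj ki kj (mat 1) (diag_mat l) (diag_mat q)"
    if W: "feasible ki kj (mat 1) (diag_mat l) W" for W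
  proof -
    define X1 where "X1 = mat 1 - (1/ki) *\<^sub>R W"
    define X2 where "X2 = diag_mat l + (1/kj) *\<^sub>R W"
    have "pd X1" "pd X2" "psd W"
      using W unfolding X1_def X2_def feasible_iff_log_det_args[OF ki kj] by auto
    have "X1$i$i - u$i = (q$i - W$i$i) / ki" "X2$i$i - v$i = (W$i$i - q$i) / kj" for i
      unfolding X1_def X2_def u_def v_def by (simp_all add: mat_def diff_divide_distrib)
    hence "ki * ((X1$i$i - u$i) / u$i) + kj * ((X2$i$i - v$i) / v$i)
        = (q$i - W$i$i) / u$i + (W$i$i - q$i) / v$i" for i
      using ki kj by simp
    also have "\<dots> i \<le> 0" for i
      using coord(3)[OF psd_diag_nonneg[OF \<open>psd W\<close>]] unfolding u_def v_def q_def by simp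
    finally have "(\<Sum>i\<in>UNIV. ki * ((X1$i$i - u$i) / u$i) + kj * ((X2$i$i - v$i) / v$i)) \<le> 0"
      by (rule sum_nonpos)
    hence tangent: "ki * (\<Sum>i\<in>UNIV. (X1$i$i - u$i) / u$i) + kj * (\<Sum>i\<in>UNIV. (X2$i$i - v$i) / v$i) \<le> 0"
      by (simp add: sum_distrib_left sum.distrib)
    have "ki * ln (det X1) \<le> ki * (ln (det (diag_mat u)) + (\<Sum>i\<in>UNIV. (X1$i$i - u$i) / u$i))"
      using ln_det_le_tangent_diag[OF \<open>pd X1\<close>] u ki by (simp add: mult_left_mono)
    moreover have "kj * ln (det X2) \<le> kj * (ln (det (diag_mat v)) + (\<Sum>i\<in>UNIV. (X2$i$i - v$i) / v$i))"
      using ln_det_le_tangent_diag[OF \<open>pd X2\<close>] v kj by (simp add: mult_left_mono)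
    ultimately show ?thesis
      using tangent unfolding obj_def U V X1_def[symmetric] X2_def[symmetric]
      by (simp add: algebra_simps)
  qed
  ultimately show ?thesis unfolding optimal_def q_def by blast
qed

theorem proposition3p1:
  fixes A B :: "real^'n^'n" and ki kj :: real
  assumes "ki > 0" and "kj > 0"
    and "sym_mat A" and "sym_mat B"
    and "\<exists>Y. feasible ki kj A B Y"
  shows "pd A \<and>
    (let Ystar = (ki * kj / (ki + kj)) *\<^sub>R
        (msqrt A ** proj_psd (mat 1 - msqrt_inv A ** B ** msqrt_inv A) ** msqrt A)
     in feasible ki kj A B Ystar \<and>
        (\<forall>Y. feasible ki kj A B Y \<longrightarrow> obj ki kj A B Y \<le> obj ki kj A B Ystar))"
proof -
  obtain Y0 where Y0: "feasible ki kj A B Y0" using assms(5) by blast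
  have "pd A" using feasible_imp_pd[OF assms(1) Y0] .
  obtain R l where R: "orthogonal_matrix R"
      "msqrt_inv A ** B ** msqrt_inv A = R ** diag_mat l ** transpose R"
    and G: "invertible (msqrt A ** R)"
      "(msqrt A ** R) ** mat 1 ** transpose (msqrt A ** R) = A"
      "(msqrt A ** R) ** diag_mat l ** transpose (msqrt A ** R) = B"
    by (rule pd_sym_simultaneous_congruence[OF \<open>pd A\<close> assms(4)])
  let ?G = "msqrt A ** R" and ?W = "diag_mat (\<chi> i. ki * kj / (ki + kj) * max (1 - l$i) 0)"
  have "(ki * kj / (ki + kj)) *\<^sub>R diag_mat (\<chi> i. max (1 - l$i) 0) = ?W"
    by (simp add: vec_eq_iff)
  hence Ystar: "(ki * kj / (ki + kj)) *\<^sub>R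
      (msqrt A ** proj_psd (mat 1 - msqrt_inv A ** B ** msqrt_inv A) ** msqrt A)
      = ?G ** ?W ** transpose ?G"
    by (simp add: msqrt_proj_psd_congruence[OF \<open>pd A\<close> R] matrix_sandwich_scaleR[symmetric])
  have "feasible ki kj (?G ** mat 1 ** transpose ?G) (?G ** diag_mat l ** transpose ?G) Y0"
    using Y0 by (simp only: G(2,3))
  hence "optimal ki kj (mat 1) (diag_mat l) ?W"
    using diagonal_problem_optimal[OF assms(1,2)] feasible_congruence_cancel(2)[OF G(1)] by blast
  hence "optimal ki kj (?G ** mat 1 ** transpose ?G) (?G ** diag_mat l ** transpose ?G)
      (?G ** ?W ** transpose ?G)"
    by (rule optimal_congruence[OF G(1) assms(1,2)])
  hence "optimal ki kj A B (?G ** ?W ** transpose ?G)" by (simp only: G(2,3))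
  thus ?thesis using \<open>pd A\<close> Ystar unfolding optimal_def Let_def by simp
qed

end
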